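(* Let $R$ be a commutative ring with identity and let $M$ be a torsion-free unitary $R$-module. Then the following are equivalent: (1) $M$ is a Noetherian module; (2) $M$ is a $P$-Noetherian module for all prime ideals $P$ of $R$; (3) $M$ is an $\mathfrak{m}$-Noetherian module for all maximal ideals $\mathfrak{m}$ of $R$.
   Context: For a prime ideal $P$ of $R$ and $S=R\setminus P$, $M$ is $P$-Noetherian if every submodule $L$ of $M$ is $S$-finite, i.e. there exist $s\in S$ and a finitely generated submodule $F$ of $M$ with $Ls\subseteq F\subseteq L$. *)

theory Defs
  imports "HOL-Algebra.Algebra"
begin

definition fg_submodule :: "('a, 'c) ring_scheme \<Rightarrow> ('a, 'b, 'd) module_scheme \<Rightarrow> 'b set \<Rightarrow> bool" where
  "fg_submodule R M F \<longleftrightarrow>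
     (\<exists>A. finite A \<and> A \<subseteq> carrier M \<and>
          F = {finsum M (\<lambda>a. c a \<odot>\<^bsub>M\<^esub> a) A | c. c \<in> A \<rightarrow> carrier R})"

definition noetherian_module :: "('a, 'c) ring_scheme \<Rightarrow> ('a, 'b, 'd) module_scheme \<Rightarrow> bool" where
  "noetherian_module R M \<longleftrightarrow> (\<forall>L. submodule L R M \<longrightarrow> fg_submodule R M L)"

definition S_finite :: "('a, 'c) ring_scheme \<Rightarrow> ('a, 'b, 'd) module_scheme \<Rightarrow> 'a set \<Rightarrow> 'b set \<Rightarrow> bool" where
  "S_finite R M S L \<longleftrightarrow>
     (\<exists>s\<in>S. \<exists>F. fg_submodule R M F \<and> (\<lambda>x. s \<odot>\<^bsub>M\<^esub> x) ` L \<subseteq> F \<and> F \<subseteq> L)"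

definition P_noetherian :: "('a, 'c) ring_scheme \<Rightarrow> ('a, 'b, 'd) module_scheme \<Rightarrow> 'a set \<Rightarrow> bool" where
  "P_noetherian R M P \<longleftrightarrow>
     (\<forall>L. submodule L R M \<longrightarrow> S_finite R M (carrier R - P) L)"

definition torsion_free :: "('a, 'c) ring_scheme \<Rightarrow> ('a, 'b, 'd) module_scheme \<Rightarrow> bool" where
  "torsion_free R M \<longleftrightarrow>
     (\<forall>r\<in>carrier R. \<forall>x\<in>carrier M.
        (\<forall>y\<in>carrier R. r \<otimes>\<^bsub>R\<^esub> y = \<zero>\<^bsub>R\<^esub> \<longrightarrow> y = \<zero>\<^bsub>R\<^esub>) \<and> r \<odot>\<^bsub>M\<^esub> x = \<zero>\<^bsub>M\<^esub>
        \<longrightarrow> x = \<zero>\<^bsub>M\<^esub>)"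

end

theory Submission
  imports Defs
begin

text \<open>For a submodule \<open>L\<close> of \<open>M\<close>, the scalars \<open>s\<close> for which \<open>s L\<close> lies in a finitely
  generated submodule of \<open>L\<close> form an ideal \<open>T\<close> of \<open>R\<close>. \<open>L\<close> is finitely generated iff
  \<open>\<one> \<in> T\<close>, and \<open>L\<close> is \<open>(R - P)\<close>-finite iff \<open>T \<not>\<subseteq> P\<close>. If \<open>M\<close> is \<open>\<mm>\<close>-Noetherian for
  every maximal ideal \<open>\<mm>\<close>, then \<open>T\<close> lies in no maximal ideal, so \<open>T = R\<close> by Krull's
  theorem and \<open>L\<close> is finitely generated.\<close>

lemma (in cring) cring_idealI:
  assumes "I \<subseteq> carrier R" "\<zero> \<in> I"
    and "\<And>a b. a \<in> I \<Longrightarrow> b \<in> I \<Longrightarrow> a \<oplus> b \<in> I"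
    and "\<And>a r. a \<in> I \<Longrightarrow> r \<in> carrier R \<Longrightarrow> r \<otimes> a \<in> I"
  shows "ideal I R"
proof (rule idealI[OF ring_axioms])
  have "\<ominus> a \<in> I" if "a \<in> I" for a
  proof -
    have "(\<ominus> \<one>) \<otimes> a \<in> I"
      using assms(4) that by simp
    then show ?thesis
      using assms(1) that l_minus by (simp add: subset_iff)
  qed
  then show "subgroup I (add_monoid R)"
    using assms(1-3) by (intro subgroup.intro) (auto simp: a_inv_def)
  show "\<And>a r. a \<in> I \<Longrightarrow> r \<in> carrier R \<Longrightarrow> r \<otimes> a \<in> I"
    using assms(4) .
  show "\<And>a r. a \<in> I \<Longrightarrow> r \<in> carrier R \<Longrightarrow> a \<otimes> r \<in> I"
    using assms(1,4) m_comm by (metis subsetD)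
qed

lemma (in cring) ideal_in_maximalideal:
  assumes "ideal I R" "I \<noteq> carrier R"
  obtains m where "maximalideal m R" "I \<subseteq> m"
proof -
  define A where "A = {J. ideal J R \<and> I \<subseteq> J \<and> \<one> \<notin> J}"
  have "I \<in> A"
    using assms ideal.one_imp_carrier unfolding A_def by blast
  have "\<exists>m\<in>A. \<forall>J\<in>A. m \<subseteq> J \<longrightarrow> J = m"
  proof (rule subset_Zorn_nonempty)
    show "A \<noteq> {}" using \<open>I \<in> A\<close> by blast
    fix C assume C: "C \<noteq> {}" "subset.chain A C"
    then have "subset.chain {J. ideal J R} C"
      unfolding pred_on.chain_def A_def by auto
    with C(1) have "ideal (\<Union>C) R"
      using chain_Union_is_ideal by presburger
    moreover have "I \<subseteq> \<Union>C"
      using C unfolding pred_on.chain_def A_def by blast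
    moreover have "\<one> \<notin> \<Union>C"
      using C unfolding pred_on.chain_def A_def by auto
    ultimately show "\<Union>C \<in> A"
      unfolding A_def by simp
  qed
  then obtain m where m: "m \<in> A" "\<And>J. J \<in> A \<Longrightarrow> m \<subseteq> J \<Longrightarrow> J = m"
    by blast
  have "maximalideal m R"
  proof (rule maximalidealI)
    show "ideal m R" "carrier R \<noteq> m"
      using m(1) unfolding A_def by auto
    fix J assume "ideal J R" "m \<subseteq> J" "J \<subseteq> carrier R"
    then show "J = m \<or> J = carrier R"
      using m ideal.one_imp_carrier unfolding A_def by blast
  qed
  moreover have "I \<subseteq> m"
    using m(1) unfolding A_def by simp
  ultimately show thesis ..
qed

definition lin_span :: "('a, 'c) ring_scheme \<Rightarrow> ('a, 'b, 'd) module_scheme \<Rightarrow> 'b set \<Rightarrow> 'b set" where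
  "lin_span R M A = {finsum M (\<lambda>a. c a \<odot>\<^bsub>M\<^esub> a) A | c. c \<in> A \<rightarrow> carrier R}"

lemma lin_span_memI:
  "x = finsum M (\<lambda>a. c a \<odot>\<^bsub>M\<^esub> a) A \<Longrightarrow> c \<in> A \<rightarrow> carrier R \<Longrightarrow> x \<in> lin_span R M A"
  unfolding lin_span_def by blast

lemma fg_submodule_iff_lin_span:
  "fg_submodule R M F \<longleftrightarrow> (\<exists>A. finite A \<and> A \<subseteq> carrier M \<and> F = lin_span R M A)"
  unfolding fg_submodule_def lin_span_def by simp

context module
begin

lemma finsum_in_submodule:
  assumes "submodule L R M" "finite A" "f \<in> A \<rightarrow> L"
  shows "finsum M f A \<in> L"
  using assms(2,3)
proof (induction A)
  case empty
  then show ?case using subgroup.one_closed[OF submodule.axioms(1)[OF assms(1)]] by simp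
next
  case (insert x A)
  then have "finsum M f (insert x A) = f x \<oplus>\<^bsub>M\<^esub> finsum M f A"
    using submoduleE(1)[OF assms(1)] by (intro finsum_insert) auto
  with insert show ?case using submoduleE(5)[OF assms(1)] by simp
qed

lemma lin_span_subset_submodule:
  assumes "submodule L R M" "finite A" "A \<subseteq> L"
  shows "lin_span R M A \<subseteq> L"
proof
  fix x assume "x \<in> lin_span R M A"
  then obtain c where "c \<in> A \<rightarrow> carrier R" "x = finsum M (\<lambda>a. c a \<odot>\<^bsub>M\<^esub> a) A"
    unfolding lin_span_def by blast
  with assms show "x \<in> L"
    by (auto intro!: finsum_in_submodule submoduleE(4))
qed

lemma generator_in_lin_span:
  assumes "finite A" "A \<subseteq> carrier M" "b \<in> A"
  shows "b \<in> lin_span R M A"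
proof -
  define c where "c a = (if b = a then \<one> else \<zero>)" for a
  have "finsum M (\<lambda>a. c a \<odot>\<^bsub>M\<^esub> a) A = finsum M (\<lambda>a. if b = a then a else \<zero>\<^bsub>M\<^esub>) A"
    using assms(2) unfolding c_def by (intro finsum_cong') auto
  also have "\<dots> = b"
    using assms by (intro finsum_singleton) auto
  finally have "b = finsum M (\<lambda>a. c a \<odot>\<^bsub>M\<^esub> a) A" ..
  moreover have "c \<in> A \<rightarrow> carrier R"
    unfolding c_def by simp
  ultimately show ?thesis
    by (rule lin_span_memI)
qed

lemma lin_span_mono:
  assumes "finite B" "B \<subseteq> carrier M" "A \<subseteq> B"
  shows "lin_span R M A \<subseteq> lin_span R M B"
proof
  fix x assume "x \<in> lin_span R M A"
  then obtain c where c: "c \<in> A \<rightarrow> carrier R" "x = finsum M (\<lambda>a. c a \<odot>\<^bsub>M\<^esub> a) A"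
    unfolding lin_span_def by blast
  define d where "d a = (if a \<in> A then c a else \<zero>)" for a
  have d: "d \<in> B \<rightarrow> carrier R"
    using c(1) unfolding d_def by auto
  have "x = finsum M (\<lambda>a. d a \<odot>\<^bsub>M\<^esub> a) B"
    unfolding c(2)
  proof (rule add.finprod_mono_neutral_cong_left)
    show "(\<lambda>a. d a \<odot>\<^bsub>M\<^esub> a) \<in> B \<rightarrow> carrier M"
      using d assms(2) by auto
  qed (use assms in \<open>auto simp: d_def\<close>)
  with d show "x \<in> lin_span R M B"
    unfolding lin_span_def by blast
qed

lemma lin_span_add_closed:
  assumes "finite A" "A \<subseteq> carrier M" "x \<in> lin_span R M A" "y \<in> lin_span R M A"
  shows "x \<oplus>\<^bsub>M\<^esub> y \<in> lin_span R M A"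
proof -
  obtain c d where cd: "c \<in> A \<rightarrow> carrier R" "x = finsum M (\<lambda>a. c a \<odot>\<^bsub>M\<^esub> a) A"
    "d \<in> A \<rightarrow> carrier R" "y = finsum M (\<lambda>a. d a \<odot>\<^bsub>M\<^esub> a) A"
    using assms(3,4) unfolding lin_span_def by blast
  have "x \<oplus>\<^bsub>M\<^esub> y = finsum M (\<lambda>a. c a \<odot>\<^bsub>M\<^esub> a \<oplus>\<^bsub>M\<^esub> d a \<odot>\<^bsub>M\<^esub> a) A"
    using cd assms(1,2) by (subst finsum_addf) (auto simp: Pi_def)
  also have "\<dots> = finsum M (\<lambda>a. (c a \<oplus> d a) \<odot>\<^bsub>M\<^esub> a) A"
    using cd assms(2) by (intro finsum_cong') (auto simp: subset_iff Pi_def smult_l_distr)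
  finally have "x \<oplus>\<^bsub>M\<^esub> y = finsum M (\<lambda>a. (c a \<oplus> d a) \<odot>\<^bsub>M\<^esub> a) A" .
  moreover have "(\<lambda>a. c a \<oplus> d a) \<in> A \<rightarrow> carrier R"
    using cd by auto
  ultimately show ?thesis
    by (rule lin_span_memI)
qed

lemma lin_span_smult_closed:
  assumes "finite A" "A \<subseteq> carrier M" "x \<in> lin_span R M A" "r \<in> carrier R"
  shows "r \<odot>\<^bsub>M\<^esub> x \<in> lin_span R M A"
proof -
  obtain c where c: "c \<in> A \<rightarrow> carrier R" "x = finsum M (\<lambda>a. c a \<odot>\<^bsub>M\<^esub> a) A"
    using assms(3) unfolding lin_span_def by blast
  have "r \<odot>\<^bsub>M\<^esub> x = finsum M (\<lambda>a. r \<odot>\<^bsub>M\<^esub> (c a \<odot>\<^bsub>M\<^esub> a)) A"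
    using c assms by (simp add: finsum_smult_ldistr Pi_def subset_iff)
  also have "\<dots> = finsum M (\<lambda>a. (r \<otimes> c a) \<odot>\<^bsub>M\<^esub> a) A"
    using c assms(2,4) by (intro finsum_cong') (auto simp: subset_iff Pi_def smult_assoc1)
  finally have "r \<odot>\<^bsub>M\<^esub> x = finsum M (\<lambda>a. (r \<otimes> c a) \<odot>\<^bsub>M\<^esub> a) A" .
  moreover have "(\<lambda>a. r \<otimes> c a) \<in> A \<rightarrow> carrier R"
    using c assms(4) by auto
  ultimately show ?thesis
    by (rule lin_span_memI)
qed

end

definition finiteness_ideal :: "('a, 'c) ring_scheme \<Rightarrow> ('a, 'b, 'd) module_scheme \<Rightarrow> 'b set \<Rightarrow> 'a set" where
  "finiteness_ideal R M L = {s \<in> carrier R. S_finite R M {s} L}"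

lemma S_finite_iff_finiteness_ideal:
  "S \<subseteq> carrier R \<Longrightarrow> S_finite R M S L \<longleftrightarrow> S \<inter> finiteness_ideal R M L \<noteq> {}"
  unfolding finiteness_ideal_def S_finite_def by blast

context module
begin

lemma ex_fg_submodule_within_iff:
  assumes "submodule L R M"
  shows "(\<exists>F. fg_submodule R M F \<and> F \<subseteq> L \<and> Q F) \<longleftrightarrow>
    (\<exists>A. finite A \<and> A \<subseteq> L \<and> Q (lin_span R M A))"
proof
  assume "\<exists>F. fg_submodule R M F \<and> F \<subseteq> L \<and> Q F"
  then obtain A where A: "finite A" "A \<subseteq> carrier M" "lin_span R M A \<subseteq> L" "Q (lin_span R M A)"
    unfolding fg_submodule_iff_lin_span by blast
  moreover have "A \<subseteq> lin_span R M A"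
    using A(1,2) by (auto intro: generator_in_lin_span)
  ultimately show "\<exists>A. finite A \<and> A \<subseteq> L \<and> Q (lin_span R M A)"
    by blast
next
  assume "\<exists>A. finite A \<and> A \<subseteq> L \<and> Q (lin_span R M A)"
  then obtain A where A: "finite A" "A \<subseteq> L" "Q (lin_span R M A)"
    by blast
  moreover have "A \<subseteq> carrier M"
    using A(2) submoduleE(1)[OF assms] by blast
  ultimately show "\<exists>F. fg_submodule R M F \<and> F \<subseteq> L \<and> Q F"
    using lin_span_subset_submodule[OF assms] unfolding fg_submodule_iff_lin_span by blast
qed

lemma finiteness_ideal_iff:
  assumes "submodule L R M"
  shows "s \<in> finiteness_ideal R M L \<longleftrightarrow>
    s \<in> carrier R \<and> (\<exists>A. finite A \<and> A \<subseteq> L \<and> (\<forall>x\<in>L. s \<odot>\<^bsub>M\<^esub> x \<in> lin_span R M A))"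
proof -
  have "S_finite R M {s} L \<longleftrightarrow>
      (\<exists>F. fg_submodule R M F \<and> F \<subseteq> L \<and> (\<forall>x\<in>L. s \<odot>\<^bsub>M\<^esub> x \<in> F))"
    unfolding S_finite_def image_subset_iff by auto
  then show ?thesis
    unfolding finiteness_ideal_def ex_fg_submodule_within_iff[OF assms] by simp
qed

lemma finiteness_ideal_is_ideal:
  assumes L: "submodule L R M"
  shows "ideal (finiteness_ideal R M L) R"
proof (rule cring_idealI)
  note T_iff = finiteness_ideal_iff[OF L]
  have L_carrier: "L \<subseteq> carrier M"
    using submoduleE(1)[OF L] .
  show "finiteness_ideal R M L \<subseteq> carrier R"
    unfolding finiteness_ideal_def by blast
  have "\<zero>\<^bsub>M\<^esub> \<in> L"
    using subgroup.one_closed[OF submodule.axioms(1)[OF L]] by simp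
  moreover have "\<zero> \<odot>\<^bsub>M\<^esub> x \<in> lin_span R M {\<zero>\<^bsub>M\<^esub>}" if "x \<in> L" for x
    using that L_carrier generator_in_lin_span[of "{\<zero>\<^bsub>M\<^esub>}"] by auto
  ultimately show "\<zero> \<in> finiteness_ideal R M L"
    unfolding T_iff by blast
  fix s assume "s \<in> finiteness_ideal R M L"
  then obtain A where s: "s \<in> carrier R" and A: "finite A" "A \<subseteq> L"
    and sL: "\<And>x. x \<in> L \<Longrightarrow> s \<odot>\<^bsub>M\<^esub> x \<in> lin_span R M A"
    unfolding T_iff by blast
  have A_carrier: "A \<subseteq> carrier M"
    using A(2) L_carrier by blast
  show "r \<otimes> s \<in> finiteness_ideal R M L" if r: "r \<in> carrier R" for r
  proof -
    have "(r \<otimes> s) \<odot>\<^bsub>M\<^esub> x \<in> lin_span R M A" if "x \<in> L" for x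
      using lin_span_smult_closed[OF A(1) A_carrier sL[OF that] r] smult_assoc1[OF r s] L_carrier that
      by auto
    then show ?thesis
      unfolding T_iff using A r s by blast
  qed
  fix t assume "t \<in> finiteness_ideal R M L"
  then obtain B where t: "t \<in> carrier R" and B: "finite B" "B \<subseteq> L"
    and tL: "\<And>x. x \<in> L \<Longrightarrow> t \<odot>\<^bsub>M\<^esub> x \<in> lin_span R M B"
    unfolding T_iff by blast
  have AB: "finite (A \<union> B)" "A \<union> B \<subseteq> carrier M"
    using A B L_carrier by auto
  have "(s \<oplus> t) \<odot>\<^bsub>M\<^esub> x \<in> lin_span R M (A \<union> B)" if "x \<in> L" for x
  proof -
    have "s \<odot>\<^bsub>M\<^esub> x \<in> lin_span R M (A \<union> B)" "t \<odot>\<^bsub>M\<^esub> x \<in> lin_span R M (A \<union> B)"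
      using sL[OF that] tL[OF that] lin_span_mono[OF AB] by blast+
    then show ?thesis
      using lin_span_add_closed[OF AB] smult_l_distr s t that L_carrier by auto
  qed
  then show "s \<oplus> t \<in> finiteness_ideal R M L"
    unfolding T_iff using A B s t by blast
qed

lemma one_in_finiteness_ideal_iff:
  assumes "submodule L R M"
  shows "\<one> \<in> finiteness_ideal R M L \<longleftrightarrow> fg_submodule R M L"
proof -
  have "(\<lambda>x. \<one> \<odot>\<^bsub>M\<^esub> x) ` L = L"
    using submoduleE(1)[OF assms] by (force simp: subset_iff)
  then show ?thesis
    unfolding finiteness_ideal_def S_finite_def by auto
qed

lemma noetherian_imp_P_noetherian:
  assumes "noetherian_module R M" "\<one> \<notin> P"
  shows "P_noetherian R M P"
  using assms one_in_finiteness_ideal_iff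
  unfolding noetherian_module_def P_noetherian_def
  by (auto simp: S_finite_iff_finiteness_ideal)

lemma noetherian_if_maximal_noetherian:
  assumes "\<And>m. maximalideal m R \<Longrightarrow> P_noetherian R M m"
  shows "noetherian_module R M"
  unfolding noetherian_module_def
proof (intro allI impI)
  fix L assume L: "submodule L R M"
  have "finiteness_ideal R M L = carrier R"
  proof (rule ccontr)
    assume "finiteness_ideal R M L \<noteq> carrier R"
    then obtain m where "maximalideal m R" "finiteness_ideal R M L \<subseteq> m"
      using ideal_in_maximalideal finiteness_ideal_is_ideal[OF L] by blast
    with assms L show False
      unfolding P_noetherian_def
      by (auto simp: S_finite_iff_finiteness_ideal)
  qed
  then show "fg_submodule R M L"
    using one_in_finiteness_ideal_iff[OF L] by simp
qed

end

theorem proposition2p3: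
  fixes R :: "('a, 'c) ring_scheme" and M :: "('a, 'b, 'd) module_scheme"
  assumes "module R M"
    and "torsion_free R M"
  shows "(noetherian_module R M \<longleftrightarrow> (\<forall>P. primeideal P R \<longrightarrow> P_noetherian R M P))
       \<and> ((\<forall>P. primeideal P R \<longrightarrow> P_noetherian R M P) \<longleftrightarrow>
          (\<forall>m. maximalideal m R \<longrightarrow> P_noetherian R M m))"
proof -
  interpret module R M by fact
  have "\<one>\<^bsub>R\<^esub> \<notin> P" if "primeideal P R" for P
    using that primeideal.I_notcarr ideal.one_imp_carrier primeideal.axioms(1) by metis
  then have "noetherian_module R M \<Longrightarrow> primeideal P R \<Longrightarrow> P_noetherian R M P" for P
    using noetherian_imp_P_noetherian by blast
  moreover have "primeideal m R" if "maximalideal m R" for m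
    using that R.maximalideal_prime by blast
  ultimately show ?thesis
    using noetherian_if_maximal_noetherian by blast
qed

end
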